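(* Consider the secure distributed linearly separable computation problem with $\mathsf K_{\rm c}=1$, $\mathsf M=\frac{\mathsf K}{\mathsf N}\mathsf M'$ where $\mathsf M'=\mathsf N-\mathsf N_{\rm r}+1$. Let $g=\gcd(\mathsf N,\mathsf M')$ and suppose $\mathsf M'/g\ge 3$ and $\mathrm{Mod}(\mathsf N/g,\mathsf M'/g)=\mathsf M'/g-1$. Then $\eta^\star\ge\lceil\mathsf N/\mathsf M'\rceil$.
   Context: Problem setting. $\mathsf K,\mathsf N,\mathsf N_{\rm r}$ are positive integers with $\mathsf N_{\rm r}\le \mathsf N$ and $\mathsf N$ dividing $\mathsf K$. Fix a prime power $\mathsf q$ (sufficiently large) and a positive integer $\mathsf L$. Datasets $D_1,\dots,D_{\mathsf K}$ are independent; message $W_k=f_k(D_k)\in\mathbb F_{\mathsf q}^{\mathsf L}$, with $W_1,\dots,W_{\mathsf K}$ mutually independent and uniform over $\mathbb F_{\mathsf q}^{\mathsf L}$. The user wants $W_1+\cdots+W_{\mathsf K}$. A secure scheme consists of an assignment $\mathcal Z_n\subseteq[\mathsf K]$, $|\mathcal Z_n|\le\mathsf M$; a random variable $Q$ on a finite set independent of the datasets, given to all servers but not the user; transmissions $X_n=\psi_n(\{W_k:k\in\mathcal Z_n\},Q)\in\mathbb F_{\mathsf q}^{\mathsf T_n}$; decodability from $\{X_n:n\in\mathcal A\}$ for every $\mathcal A\subseteq[\mathsf N]$, $|\mathcal A|=\mathsf N_{\rm r}$; security $I(W_1,\dots,W_{\mathsf K};X_1,\dots,X_{\mathsf N}\mid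 W_1+\cdots+W_{\mathsf K})=0$. Communication cost $\mathsf R=\max_{|\mathcal A|=\mathsf N_{\rm r}}\sum_{n\in\mathcal A}\mathsf T_n/\mathsf L$; randomness size $\eta=H(Q)/\mathsf L$ ($\mathsf q$-ary units). $\mathsf R^\star$ is the minimum communication cost over secure schemes and $\eta^\star$ the minimum of $\eta$ over secure schemes with $\mathsf R=\mathsf R^\star$. Convention: $\mathrm{Mod}(b,a)\in\{1,\dots,a\}$ denotes the residue of $b$ modulo $a$, with $\mathrm{Mod}(b,a)=a$ when $a\mid b$. *)

theory Defs
  imports "HOL-Algebra.Ring" "HOL-Probability.Probability_Mass_Function"
begin

definition Modp :: "nat \<Rightarrow> nat \<Rightarrow> nat" where
  "Modp b a = (if b mod a = 0 then a else b mod a)"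

definition pmf_entropy :: "real \<Rightarrow> 'x pmf \<Rightarrow> real" where
  "pmf_entropy b p = - (\<Sum>x\<in>set_pmf p. pmf p x * log b (pmf p x))"

definition rv_entropy :: "real \<Rightarrow> 'w pmf \<Rightarrow> ('w \<Rightarrow> 'x) \<Rightarrow> real" where
  "rv_entropy b P f = pmf_entropy b (map_pmf f P)"

definition cond_mi :: "real \<Rightarrow> 'w pmf \<Rightarrow> ('w \<Rightarrow> 'x) \<Rightarrow> ('w \<Rightarrow> 'y) \<Rightarrow> ('w \<Rightarrow> 'z) \<Rightarrow> real" where
  "cond_mi b P X Y Z =
     rv_entropy b P (\<lambda>w. (X w, Z w)) + rv_entropy b P (\<lambda>w. (Y w, Z w))
     - rv_entropy b P (\<lambda>w. (X w, Y w, Z w)) - rv_entropy b P Z"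

definition vecs :: "('a, 'b) ring_scheme \<Rightarrow> nat \<Rightarrow> 'a list set" where
  "vecs F n = {xs. length xs = n \<and> set xs \<subseteq> carrier F}"

definition msg_space :: "('a, 'b) ring_scheme \<Rightarrow> nat \<Rightarrow> nat \<Rightarrow> (nat \<Rightarrow> 'a list) set" where
  "msg_space F K L = {W. (\<forall>k\<in>{1..K}. W k \<in> vecs F L) \<and> (\<forall>k. k \<notin> {1..K} \<longrightarrow> W k = [])}"

definition msum :: "('a, 'b) ring_scheme \<Rightarrow> nat \<Rightarrow> nat \<Rightarrow> (nat \<Rightarrow> 'a list) \<Rightarrow> 'a list" where
  "msum F K L W = foldr (\<lambda>k acc. map2 (add F) (W k) acc) [1..<K+1] (replicate L (zero F))"

(* sample distribution: messages i.i.d. uniform, independent of the randomness Q *)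
definition joint :: "('a, 'b) ring_scheme \<Rightarrow> nat \<Rightarrow> nat \<Rightarrow> nat pmf \<Rightarrow> ((nat \<Rightarrow> 'a list) \<times> nat) pmf" where
  "joint F K L PQ = pair_pmf (pmf_of_set (msg_space F K L)) PQ"

(* transmission of server n: X_n = psi_n({W_k : k in Z_n}, Q) *)
definition trans :: "(nat \<Rightarrow> nat set) \<Rightarrow> (nat \<Rightarrow> (nat \<Rightarrow> 'a list) \<Rightarrow> nat \<Rightarrow> 'a list)
     \<Rightarrow> nat \<Rightarrow> (nat \<Rightarrow> 'a list) \<times> nat \<Rightarrow> 'a list" where
  "trans Z \<psi> n \<omega> = \<psi> n (\<lambda>k. if k \<in> Z n then fst \<omega> k else []) (snd \<omega>)"

definition trans_all :: "nat \<Rightarrow> (nat \<Rightarrow> nat set) \<Rightarrow> (nat \<Rightarrow> (nat \<Rightarrow> 'a list) \<Rightarrow> nat \<Rightarrow> 'a list)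
     \<Rightarrow> (nat \<Rightarrow> 'a list) \<times> nat \<Rightarrow> nat \<Rightarrow> 'a list" where
  "trans_all N Z \<psi> \<omega> = (\<lambda>n. if n \<in> {1..N} then trans Z \<psi> n \<omega> else [])"

definition secure_scheme :: "('a, 'b) ring_scheme \<Rightarrow> nat \<Rightarrow> nat \<Rightarrow> nat \<Rightarrow> nat \<Rightarrow> nat
     \<Rightarrow> (nat \<Rightarrow> nat set) \<Rightarrow> (nat \<Rightarrow> nat) \<Rightarrow> (nat \<Rightarrow> (nat \<Rightarrow> 'a list) \<Rightarrow> nat \<Rightarrow> 'a list)
     \<Rightarrow> nat pmf \<Rightarrow> bool" where
  "secure_scheme F K N Nr M L Z T \<psi> PQ \<longleftrightarrow>
     (\<forall>n\<in>{1..N}. Z n \<subseteq> {1..K} \<and> card (Z n) \<le> M) \<and>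
     finite (set_pmf PQ) \<and>
     (\<forall>n\<in>{1..N}. \<forall>\<omega>\<in>set_pmf (joint F K L PQ). trans Z \<psi> n \<omega> \<in> vecs F (T n)) \<and>
     (\<forall>A. A \<subseteq> {1..N} \<and> card A = Nr \<longrightarrow>
        (\<exists>dec. \<forall>\<omega>\<in>set_pmf (joint F K L PQ).
            dec (\<lambda>n. if n \<in> A then trans Z \<psi> n \<omega> else []) = msum F K L (fst \<omega>))) \<and>
     cond_mi (real (card (carrier F))) (joint F K L PQ) fst (trans_all N Z \<psi>) (\<lambda>\<omega>. msum F K L (fst \<omega>)) = 0"

definition comm_cost :: "nat \<Rightarrow> nat \<Rightarrow> nat \<Rightarrow> (nat \<Rightarrow> nat) \<Rightarrow> real" where
  "comm_cost N Nr L T = Max {(\<Sum>n\<in>A. real (T n)) / real L | A. A \<subseteq> {1..N} \<and> card A = Nr}"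

definition rand_size :: "('a, 'b) ring_scheme \<Rightarrow> nat \<Rightarrow> nat pmf \<Rightarrow> real" where
  "rand_size F L PQ = pmf_entropy (real (card (carrier F))) PQ / real L"

definition opt_cost :: "('a, 'b) ring_scheme \<Rightarrow> nat \<Rightarrow> nat \<Rightarrow> nat \<Rightarrow> nat \<Rightarrow> nat \<Rightarrow> real" where
  "opt_cost F K N Nr M L = Inf {comm_cost N Nr L T | Z T \<psi> PQ. secure_scheme F K N Nr M L Z T \<psi> PQ}"

end

theory Submission
  imports Defs
begin

text \<open>
  Let \<open>hold k\<close> be the set of servers storing dataset \<open>k\<close>. Any \<open>Nr\<close> servers outside
  \<open>hold k\<close> would decode the sum without seeing \<open>W_k\<close>, so \<open>|hold k| \<ge> Mp\<close>; since
  \<open>\<Sum>\<^sub>n |Z n| \<le> N M = K Mp\<close>, every dataset is held by exactly \<open>Mp\<close> servers and every server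
  holds exactly \<open>M\<close> datasets. Call datasets \<open>k_1, ..., k_m\<close> peelable if each \<open>k_i\<close> is held
  by a server holding none of \<open>k_(i+1), ..., k_m\<close>. That server, together with the \<open>Nr - 1\<close>
  servers not holding \<open>k_i\<close>, forms a decoding set, so knowing the messages outside the
  sequence and \<open>k_1, ..., k_(i-1)\<close> the transmissions determine \<open>W_(k_i)\<close>. Hence
  \<open>H(X) \<ge> m L\<close>, while security gives \<open>H(X) \<le> H(Q) + L\<close>, so \<open>H(Q) \<ge> (m - 1) L\<close>.

  The hypothesis on \<open>Mod\<close> says \<open>c Mp = N + g\<close> with \<open>c = \<lceil>N / Mp\<rceil>\<close> and \<open>0 < 2 g < Mp\<close>,
  and it remains to find a peelable sequence of length \<open>c + 1\<close>. If there is none, then for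
  every set \<open>X\<close> of \<open>c - 1 - t\<close> servers the distinct holder sets avoiding \<open>X\<close> are \<open>t + 1\<close>
  pairwise disjoint blocks (induction on \<open>t\<close>). For \<open>X = {}\<close> they partition the \<open>N\<close> servers
  into \<open>c\<close> blocks of size \<open>Mp\<close>, contradicting \<open>g > 0\<close>.
\<close>

fun peelable :: "('k \<Rightarrow> 'v set) \<Rightarrow> 'k list \<Rightarrow> bool" where
  "peelable hold [] \<longleftrightarrow> True"
| "peelable hold (k # ks) \<longleftrightarrow> (\<exists>v\<in>hold k. \<forall>k'\<in>set ks. v \<notin> hold k') \<and> peelable hold ks"

lemma peelable_distinct: "peelable hold ks \<Longrightarrow> distinct ks"
  by (induction ks) auto

lemma card_eq_avoiders_plus_containers:
  assumes "finite G"
  shows "card G = card {H\<in>G. v \<notin> H} + card {H\<in>G. v \<in> H}"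
proof -
  have "card G = card ({H\<in>G. v \<notin> H} \<union> {H\<in>G. v \<in> H})"
    by (rule arg_cong[where f = card]) auto
  also have "\<dots> = card {H\<in>G. v \<notin> H} + card {H\<in>G. v \<in> H}"
    by (rule card_Un_disjoint) (use assms in auto)
  finally show ?thesis .
qed

lemma card_Union_disjoint_const:
  assumes "disjoint G" "\<And>H. H \<in> G \<Longrightarrow> finite H \<and> card H = r"
  shows "card (\<Union>G) = card G * r"
  using card_Union_disjoint[of G] assms by simp

lemma card_mult_eq_count_mult_card_Union:
  assumes fin: "finite G" and card: "\<And>H. H \<in> G \<Longrightarrow> finite H \<and> card H = r"
    and count: "\<And>v. v \<in> \<Union>G \<Longrightarrow> card {H\<in>G. v \<in> H} = s"
  shows "card G * r = s * card (\<Union>G)"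
proof -
  have "(\<Sum>H\<in>G. card {v\<in>\<Union>G. v \<in> H}) = s * card (\<Union>G)"
    by (rule sum_multicount) (use fin card count in auto)
  moreover have "{v\<in>\<Union>G. v \<in> H} = H" if "H \<in> G" for H
    using that by blast
  ultimately show ?thesis
    using card by simp
qed

lemma disjoint_if_unique_container:
  assumes "finite G" and "\<And>v. v \<in> \<Union>G \<Longrightarrow> card {H\<in>G. v \<in> H} = 1"
  shows "disjoint G"
  unfolding disjoint_def
proof (intro ballI impI)
  fix H H' assume HH: "H \<in> G" "H' \<in> G" "H \<noteq> H'"
  show "H \<inter> H' = {}"
  proof (rule ccontr)
    assume "H \<inter> H' \<noteq> {}"
    then obtain v where "v \<in> H" "v \<in> H'" by blast
    then have "{H, H'} \<subseteq> {H\<in>G. v \<in> H}" "v \<in> \<Union>G"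
      using HH by auto
    then show False
      using assms HH(3) card_mono[of "{H\<in>G. v \<in> H}" "{H, H'}"] by auto
  qed
qed

text \<open>If the members avoiding any given point are always \<open>t + 1 \<ge> 2\<close> pairwise disjoint sets,
  then every point lies in exactly \<open>s\<close> members and double counting gives
  \<open>(s + t + 1) r = s |\<Union>G| > s (t + 1) r\<close>, which forces \<open>s = 1\<close>.\<close>

lemma disjoint_if_avoiders_disjoint:
  fixes G :: "'v set set"
  assumes fin: "finite G" and ne: "G \<noteq> {}" and r: "0 < r" and t: "1 \<le> t"
    and card: "\<And>H. H \<in> G \<Longrightarrow> finite H \<and> card H = r"
    and avoid: "\<And>v. v \<in> \<Union>G \<Longrightarrow> card {H\<in>G. v \<notin> H} = t + 1 \<and> disjoint {H\<in>G. v \<notin> H}"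
  shows "card G = t + 2 \<and> disjoint G"
proof -
  let ?U = "\<Union>G"
  have finU: "finite ?U" using fin card by blast
  obtain H0 where H0: "H0 \<in> G" using ne by blast
  obtain v0 where v0: "v0 \<in> H0" using card[OF H0] r by fastforce
  have v0U: "v0 \<in> ?U" using H0 v0 by blast
  define s where "s = card {H\<in>G. v0 \<in> H}"
  have containers: "card {H\<in>G. v \<in> H} = s" if "v \<in> ?U" for v
    using card_eq_avoiders_plus_containers[OF fin, of v] card_eq_avoiders_plus_containers[OF fin, of v0]
      avoid[OF that] avoid[OF v0U] unfolding s_def by simp
  have cardG: "card G = s + t + 1"
    using card_eq_avoiders_plus_containers[OF fin, of v0] avoid[OF v0U] unfolding s_def by simp
  have "{H\<in>G. v0 \<in> H} \<noteq> {}"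
    using H0 v0 by blast
  then have s_pos: "1 \<le> s"
    using fin unfolding s_def by (simp add: Suc_leI card_gt_0_iff)
  have "(t + 1) * r < card ?U"
  proof -
    have avoid0: "card {H\<in>G. v0 \<notin> H} = t + 1" "disjoint {H\<in>G. v0 \<notin> H}"
      using avoid[OF v0U] by auto
    have "(t + 1) * r = card (\<Union>{H\<in>G. v0 \<notin> H})"
      using card_Union_disjoint_const[OF avoid0(2), of r] card avoid0(1) by simp
    also have "\<dots> \<le> card (?U - {v0})"
      by (rule card_mono) (use finU in auto)
    also have "\<dots> < card ?U"
      using finU v0U by (rule card_Diff1_less)
    finally show ?thesis .
  qed
  then have "(t + 1) * r * s < card ?U * s"
    using s_pos by simp
  also have "\<dots> = (s + t + 1) * r"
    using card_mult_eq_count_mult_card_Union[OF fin card containers] cardG by (simp add: mult.commute)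
  finally have "((t + 1) * s) * r < (s + t + 1) * r"
    by (simp add: algebra_simps)
  then have "(t + 1) * s < s + t + 1"
    using mult_less_cancel2 by blast
  then have "t * s < t + 1"
    by (simp add: algebra_simps)
  also have "\<dots> \<le> t * 2"
    using t by simp
  finally have "s = 1"
    using s_pos by simp
  then show ?thesis
    using cardG disjoint_if_unique_container[OF fin] containers by simp
qed

lemma unique_avoider_point:
  assumes card: "\<And>H. H \<in> G \<Longrightarrow> finite H \<and> card H = r" and r: "0 < r"
    and avoid1: "\<And>v. v \<in> \<Union>G \<Longrightarrow> card {H\<in>G. v \<notin> H} = 1" and H: "H \<in> G"
  shows "\<exists>v\<in>\<Union>G. {H'\<in>G. v \<notin> H'} = {H}"
proof -
  obtain w where w: "w \<in> H"
    using card[OF H] r by fastforce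
  then have "card {H'\<in>G. w \<notin> H'} = 1"
    using H avoid1 by blast
  then obtain H' where H': "H' \<in> G" "w \<notin> H'"
    by (metis (no_types, lifting) card_1_singletonE mem_Collect_eq singletonI)
  then have "H' \<noteq> H" using w by blast
  then obtain v where v: "v \<in> H'" "v \<notin> H"
    using card[OF H] card[OF H'(1)] card_subset_eq[of H H'] by blast
  have "card {H''\<in>G. v \<notin> H''} = 1"
    using v H' avoid1 by blast
  then have "{H''\<in>G. v \<notin> H''} = {H}"
    using H v by (metis (no_types, lifting) card_1_singletonE mem_Collect_eq singletonD)
  then show ?thesis
    using v H' by blast
qed

lemma disjoint_if_card_le_2:
  assumes fin: "finite G" and two: "card G \<le> 2"
    and avoided: "\<And>v. v \<in> \<Union>G \<Longrightarrow> \<exists>H\<in>G. v \<notin> H"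
  shows "disjoint G"
  unfolding disjoint_def
proof (intro ballI impI)
  fix H H' assume HH: "H \<in> G" "H' \<in> G" "H \<noteq> H'"
  show "H \<inter> H' = {}"
  proof (rule ccontr)
    assume "H \<inter> H' \<noteq> {}"
    then obtain v where v: "v \<in> H" "v \<in> H'" by blast
    have "card {H, H'} \<le> card G"
      using HH fin by (intro card_mono) auto
    then have "{H, H'} = G"
      using HH two by (intro card_subset_eq[OF fin]) auto
    then show False
      using avoided[of v] v HH by blast
  qed
qed

lemma at_most_two_blocks:
  fixes b j n d r N e g :: nat
  assumes fibres: "b * j \<le> b * d + j" and survivors: "n \<le> j + e * d"
    and count: "n * r = d * N" and excess: "(e + 2) * r = N + g" and small: "2 * g < r"
    and d: "0 < d"
  shows "b \<le> 2"
proof (rule ccontr)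
  assume "\<not> b \<le> 2"
  then obtain a where b: "b = a + 3"
    by (intro that[of "b - 3"]) simp
  have "(a + 2) * n \<le> (a + 2) * j + (a + 2) * e * d"
    using survivors by (metis add_mult_distrib2 mult.assoc mult_le_mono2)
  also have "(a + 2) * j \<le> (a + 3) * d"
    using fibres unfolding b by (simp add: algebra_simps)
  finally have "(a + 2) * n \<le> ((a + 3) + (a + 2) * e) * d"
    by (simp add: algebra_simps)
  then have "(a + 2) * n * r \<le> ((a + 3) + (a + 2) * e) * d * r"
    by (rule mult_right_mono) simp
  then have "d * ((a + 2) * N) \<le> d * (((a + 3) + (a + 2) * e) * r)"
    using count by (simp add: algebra_simps)
  then have "(a + 2) * N \<le> ((a + 3) + (a + 2) * e) * r"
    using d by simp
  then have "(a + 2) * (N + g) \<le> ((a + 3) + (a + 2) * e) * r + (a + 2) * g"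
    by (simp add: algebra_simps)
  then have "(a + 2) * ((e + 2) * r) \<le> ((a + 3) + (a + 2) * e) * r + (a + 2) * g"
    using excess by simp
  then have "(a + 1) * r \<le> (a + 2) * g"
    by (simp add: algebra_simps)
  moreover have "(a + 1) * (2 * g + 1) \<le> (a + 1) * r"
    using small by (intro mult_left_mono) simp_all
  ultimately show False
    by (simp add: algebra_simps)
qed

locale biregular =
  fixes I :: "'k set" and V :: "'v set" and hold :: "'k \<Rightarrow> 'v set" and r d :: nat
  assumes finite_I: "finite I" and finite_V: "finite V"
    and hold_subset: "k \<in> I \<Longrightarrow> hold k \<subseteq> V"
    and card_hold: "k \<in> I \<Longrightarrow> card (hold k) = r"
    and degree: "v \<in> V \<Longrightarrow> card {k\<in>I. v \<in> hold k} = d"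
begin

lemma incidence_count: "card I * r = d * card V"
proof -
  have "(\<Sum>k\<in>I. card {v\<in>V. v \<in> hold k}) = d * card V"
    by (rule sum_multicount) (use finite_I finite_V degree in auto)
  moreover have "{v\<in>V. v \<in> hold k} = hold k" if "k \<in> I" for k
    using hold_subset[OF that] by blast
  ultimately show ?thesis
    using card_hold by simp
qed

definition avoiding :: "'v set \<Rightarrow> 'k set" where
  "avoiding X = {k\<in>I. hold k \<inter> X = {}}"

definition blocks :: "'v set \<Rightarrow> 'v set set" where
  "blocks X = hold ` avoiding X"

definition has_peelable :: "'k set \<Rightarrow> nat \<Rightarrow> bool" where
  "has_peelable J m \<longleftrightarrow> (\<exists>ks. peelable hold ks \<and> set ks \<subseteq> J \<and> length ks = m)"

lemma avoiding_empty [simp]: "avoiding {} = I"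
  unfolding avoiding_def by simp

lemma finite_blocks: "finite (blocks X)"
  unfolding blocks_def avoiding_def using finite_I by simp

lemma block_card: "H \<in> blocks X \<Longrightarrow> finite H \<and> card H = r"
  unfolding blocks_def avoiding_def using card_hold hold_subset finite_V
  by (auto intro: finite_subset)

lemma block_subset: "H \<in> blocks X \<Longrightarrow> H \<subseteq> V"
  unfolding blocks_def avoiding_def using hold_subset by auto

lemma blocks_insert: "blocks (insert v X) = {H\<in>blocks X. v \<notin> H}"
  unfolding blocks_def avoiding_def by auto

lemma card_I_le_avoiding:
  assumes "X \<subseteq> V"
  shows "card I \<le> card (avoiding X) + card X * d"
proof -
  have finX: "finite X" using assms finite_V by (rule finite_subset)
  have "I \<subseteq> avoiding X \<union> (\<Union>v\<in>X. {k\<in>I. v \<in> hold k})"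
    unfolding avoiding_def by auto
  then have "card I \<le> card (avoiding X \<union> (\<Union>v\<in>X. {k\<in>I. v \<in> hold k}))"
    by (rule card_mono[rotated]) (use finite_I finX in \<open>auto simp: avoiding_def\<close>)
  also have "\<dots> \<le> card (avoiding X) + card (\<Union>v\<in>X. {k\<in>I. v \<in> hold k})"
    by (rule card_Un_le)
  also have "card (\<Union>v\<in>X. {k\<in>I. v \<in> hold k}) \<le> (\<Sum>v\<in>X. card {k\<in>I. v \<in> hold k})"
    using finX by (rule card_UN_le)
  also have "\<dots> = card X * d"
    using assms degree by (simp add: subset_iff)
  finally show ?thesis by simp
qed

lemma has_peelable_insert:
  assumes v: "v \<in> \<Union>(blocks X)" and chain: "has_peelable (avoiding (insert v X)) m"
  shows "has_peelable (avoiding X) (Suc m)"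
proof -
  obtain k where k: "k \<in> avoiding X" "v \<in> hold k"
    using v unfolding blocks_def by blast
  obtain ks where ks: "peelable hold ks" "set ks \<subseteq> avoiding (insert v X)" "length ks = m"
    using chain unfolding has_peelable_def by blast
  have "peelable hold (k # ks)"
    using ks k(2) unfolding avoiding_def by auto
  moreover have "set (k # ks) \<subseteq> avoiding X"
    using ks(2) k(1) unfolding avoiding_def by auto
  ultimately show ?thesis
    using ks(3) unfolding has_peelable_def by (metis length_Cons)
qed

end

locale biregular_excess = biregular +
  fixes c g :: nat
  assumes excess: "c * r = card V + g" and small_excess: "2 * g < r" and I_nonempty: "I \<noteq> {}"
begin

lemma r_pos: "0 < r"
  using small_excess by simp

lemma d_pos: "0 < d" and card_V_pos: "0 < card V"
proof -
  have "0 < card I * r"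
    using I_nonempty finite_I r_pos by (simp add: card_gt_0_iff)
  then show "0 < d" "0 < card V"
    using incidence_count by simp_all
qed

lemma avoiding_nonempty:
  assumes X: "X \<subseteq> V" and short: "card X < c"
  shows "avoiding X \<noteq> {}"
proof
  assume "avoiding X = {}"
  then have "card I \<le> card X * d"
    using card_I_le_avoiding[OF X] by simp
  also have "\<dots> \<le> (c - 1) * d"
    using short by (intro mult_le_mono1) simp
  finally have "card I * r \<le> (c - 1) * d * r"
    by (rule mult_le_mono1)
  also have "(c - 1) * d * r = d * ((c - 1) * r)"
    by simp
  also have "(c - 1) * r < card V"
    using excess small_excess card_V_pos by (simp add: diff_mult_distrib)
  then have "d * ((c - 1) * r) < d * card V"
    using d_pos by simp
  finally show False
    using incidence_count by simp
qed

lemma card_blocks_eq_1: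
  assumes X: "X \<subseteq> V" and len: "card X + 1 = c"
    and no_chain: "\<not> has_peelable (avoiding X) 2"
  shows "card (blocks X) = 1"
proof (rule ccontr)
  assume "card (blocks X) \<noteq> 1"
  moreover have "blocks X \<noteq> {}"
    using avoiding_nonempty[OF X] len unfolding blocks_def by simp
  ultimately have "\<exists>H1\<in>blocks X. \<exists>H2\<in>blocks X. H1 \<noteq> H2"
    by (meson is_singletonI' is_singleton_altdef)
  then obtain k1 k2 where k: "k1 \<in> avoiding X" "k2 \<in> avoiding X" "hold k1 \<noteq> hold k2"
    unfolding blocks_def by blast
  have "k1 \<in> I" "k2 \<in> I" using k unfolding avoiding_def by auto
  then have cards: "card (hold k1) = card (hold k2)" "finite (hold k2)"
    using card_hold hold_subset finite_V by (auto intro: finite_subset)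
  obtain v where "v \<in> hold k1" "v \<notin> hold k2"
    using card_subset_eq[OF cards(2) _ cards(1)] k(3) by blast
  moreover obtain w where "w \<in> hold k2"
    using cards r_pos \<open>k2 \<in> I\<close> card_hold by fastforce
  ultimately have "peelable hold [k1, k2]" by auto
  then have "has_peelable (avoiding X) 2"
    unfolding has_peelable_def using k by (intro exI[of _ "[k1, k2]"]) (simp add: numeral_2_eq_2)
  then show False
    using no_chain by contradiction
qed

lemma card_avoiding_le_fibre:
  assumes v: "v \<in> V" and only: "{H'\<in>blocks X. v \<notin> H'} = {H}"
  shows "card (avoiding X) \<le> d + card {k\<in>avoiding X. hold k = H}"
proof -
  have "avoiding X \<subseteq> {k\<in>I. v \<in> hold k} \<union> {k\<in>avoiding X. hold k = H}"
  proof
    fix k assume k: "k \<in> avoiding X"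
    then have "v \<notin> hold k \<Longrightarrow> hold k \<in> {H'\<in>blocks X. v \<notin> H'}"
      unfolding blocks_def by blast
    then show "k \<in> {k\<in>I. v \<in> hold k} \<union> {k\<in>avoiding X. hold k = H}"
      using k only unfolding avoiding_def by auto
  qed
  then have "card (avoiding X) \<le> card ({k\<in>I. v \<in> hold k} \<union> {k\<in>avoiding X. hold k = H})"
    by (rule card_mono[rotated]) (use finite_I in \<open>auto simp: avoiding_def\<close>)
  also have "\<dots> \<le> card {k\<in>I. v \<in> hold k} + card {k\<in>avoiding X. hold k = H}"
    by (rule card_Un_le)
  finally show ?thesis
    using degree[OF v] by simp
qed

lemma card_avoiding_eq_sum_fibres:
  "card (avoiding X) = (\<Sum>H\<in>blocks X. card {k\<in>avoiding X. hold k = H})"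
  unfolding blocks_def card_eq_sum
  by (rule sum.image_gen) (use finite_I in \<open>simp add: avoiding_def\<close>)

text \<open>Here the block structure alone does not suffice (the three 2-subsets of a 3-set avoid
  each point exactly once); the contradiction comes from counting the datasets in the fibres.\<close>

lemma card_blocks_eq_2:
  assumes X: "X \<subseteq> V" and len: "card X + 2 = c"
    and avoid1: "\<And>v. v \<in> \<Union>(blocks X) \<Longrightarrow> card {H\<in>blocks X. v \<notin> H} = 1"
  shows "card (blocks X) = 2 \<and> disjoint (blocks X)"
proof -
  let ?G = "blocks X" and ?J = "avoiding X"
  have other: "\<exists>v\<in>\<Union>?G. {H'\<in>?G. v \<notin> H'} = {H}" if "H \<in> ?G" for H
    by (rule unique_avoider_point[OF block_card[of _ X] r_pos avoid1 that])
  have fibre: "card ?J \<le> d + card {k\<in>?J. hold k = H}" if H: "H \<in> ?G" for H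
  proof -
    obtain v where "v \<in> \<Union>?G" and only: "{H'\<in>?G. v \<notin> H'} = {H}"
      using other[OF H] by blast
    then have "v \<in> V"
      using block_subset by blast
    then show ?thesis
      using only by (rule card_avoiding_le_fibre)
  qed
  have "card ?G * card ?J = (\<Sum>H\<in>?G. card ?J)"
    by simp
  also have "\<dots> \<le> (\<Sum>H\<in>?G. d + card {k\<in>?J. hold k = H})"
    using fibre by (rule sum_mono)
  also have "\<dots> = card ?G * d + card ?J"
    by (simp add: sum.distrib card_avoiding_eq_sum_fibres[of X])
  finally have fibres: "card ?G * card ?J \<le> card ?G * d + card ?J" .
  have "c - 2 = card X" "c - 2 + 2 = c"
    using len by simp_all
  then have "card I \<le> card ?J + (c - 2) * d" and "(c - 2 + 2) * r = card V + g"
    using card_I_le_avoiding[OF X] excess by simp_all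
  then have le2: "card ?G \<le> 2"
    using at_most_two_blocks[OF fibres _ incidence_count _ small_excess d_pos] by blast
  obtain H where H: "H \<in> ?G"
    using avoiding_nonempty[OF X] len unfolding blocks_def by fastforce
  then obtain H' where "H' \<in> ?G" "H' \<noteq> H"
    using other by blast
  then have "card {H, H'} \<le> card ?G"
    using H finite_blocks by (intro card_mono) auto
  then have "card ?G = 2"
    using le2 \<open>H' \<noteq> H\<close> by simp
  moreover have "\<exists>H\<in>?G. v \<notin> H" if "v \<in> \<Union>?G" for v
  proof -
    have "{H\<in>?G. v \<notin> H} \<noteq> {}"
      using avoid1[OF that] by (intro notI) simp
    then show ?thesis by blast
  qed
  ultimately show ?thesis
    using disjoint_if_card_le_2[OF finite_blocks] by simp
qed

lemma blocks_partition:
  assumes "X \<subseteq> V" and "card X + t + 1 = c" and "\<not> has_peelable (avoiding X) (t + 2)"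
  shows "card (blocks X) = t + 1 \<and> disjoint (blocks X)"
  using assms
proof (induction t arbitrary: X)
  case 0
  then have "card (blocks X) = 1"
    by (intro card_blocks_eq_1) (simp_all add: numeral_2_eq_2)
  then show ?case
    by (auto simp: card_1_singleton_iff)
next
  case (Suc t)
  have avoiders: "card {H\<in>blocks X. v \<notin> H} = t + 1 \<and> disjoint {H\<in>blocks X. v \<notin> H}"
    if v: "v \<in> \<Union>(blocks X)" for v
  proof -
    have "v \<in> V" "v \<notin> X"
      using v unfolding blocks_def avoiding_def using hold_subset by auto
    moreover have "\<not> has_peelable (avoiding (insert v X)) (t + 2)"
      using has_peelable_insert[OF v] Suc.prems(3) by auto
    ultimately have "card (blocks (insert v X)) = t + 1 \<and> disjoint (blocks (insert v X))"
      using Suc.prems(1,2) finite_subset[OF Suc.prems(1) finite_V] by (intro Suc.IH) auto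
    then show ?thesis
      by (simp add: blocks_insert)
  qed
  show ?case
  proof (cases t)
    case 0
    then show ?thesis
      using card_blocks_eq_2[OF Suc.prems(1)] Suc.prems(2) avoiders by simp
  next
    case (Suc t')
    have "blocks X \<noteq> {}"
      using avoiding_nonempty[OF Suc.prems(1)] Suc.prems(2) unfolding blocks_def by simp
    then show ?thesis
      using disjoint_if_avoiders_disjoint[OF finite_blocks _ r_pos, where t = t] block_card avoiders Suc
      by simp
  qed
qed

theorem has_peelable_beyond_cover:
  assumes "0 < g"
  shows "has_peelable I (c + 1)"
proof (rule ccontr)
  assume no_chain: "\<not> has_peelable I (c + 1)"
  have "0 < c"
    using excess assms by (cases c) simp_all
  then have partition: "card (blocks {}) = c \<and> disjoint (blocks {})"
    using blocks_partition[of "{}" "c - 1"] no_chain by simp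
  have "\<Union>(blocks {}) = V"
  proof
    show "\<Union>(blocks {}) \<subseteq> V"
      using block_subset by blast
    show "V \<subseteq> \<Union>(blocks {})"
    proof
      fix v assume v: "v \<in> V"
      then have "{k\<in>I. v \<in> hold k} \<noteq> {}"
        using degree d_pos by fastforce
      then show "v \<in> \<Union>(blocks {})"
        unfolding blocks_def by auto
    qed
  qed
  then have "card V = c * r"
    using card_Union_disjoint_const[of "blocks {}" r] partition block_card by simp
  then show False
    using excess assms by simp
qed

end

lemma pmf_map_eq_sum:
  assumes "finite (set_pmf p)"
  shows "pmf (map_pmf f p) y = (\<Sum>x\<in>{x\<in>set_pmf p. f x = y}. pmf p x)"
proof -
  have "pmf (map_pmf f p) y = measure p (f -` {y})" by (rule pmf_map)
  also have "\<dots> = measure p (f -` {y} \<inter> set_pmf p)" by (simp add: measure_Int_set_pmf)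
  also have "\<dots> = (\<Sum>x\<in>f -` {y} \<inter> set_pmf p. pmf p x)"
    using assms by (intro measure_measure_pmf_finite) auto
  also have "f -` {y} \<inter> set_pmf p = {x\<in>set_pmf p. f x = y}" by auto
  finally show ?thesis .
qed

lemma sum_set_pmf_map:
  assumes "finite (set_pmf p)"
  shows "(\<Sum>y\<in>set_pmf (map_pmf f p). pmf (map_pmf f p) y * h y) = (\<Sum>x\<in>set_pmf p. pmf p x * h (f x))"
proof -
  have "(\<Sum>x\<in>set_pmf p. pmf p x * h (f x)) =
        (\<Sum>y\<in>f ` set_pmf p. \<Sum>x\<in>{x\<in>set_pmf p. f x = y}. pmf p x * h (f x))"
    by (rule sum.image_gen[OF assms])
  also have "\<dots> = (\<Sum>y\<in>f ` set_pmf p. (\<Sum>x\<in>{x\<in>set_pmf p. f x = y}. pmf p x) * h y)"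
    by (intro sum.cong refl) (auto simp: sum_distrib_right)
  also have "\<dots> = (\<Sum>y\<in>f ` set_pmf p. pmf (map_pmf f p) y * h y)"
    by (simp only: pmf_map_eq_sum[OF assms])
  finally show ?thesis by simp
qed

lemma pmf_entropy_map_eq:
  assumes "finite (set_pmf p)"
  shows "pmf_entropy b (map_pmf f p) = - (\<Sum>x\<in>set_pmf p. pmf p x * log b (pmf (map_pmf f p) (f x)))"
  unfolding pmf_entropy_def using sum_set_pmf_map[OF assms, of f "\<lambda>y. log b (pmf (map_pmf f p) y)"] by simp

lemma pmf_le_pmf_map: "pmf p x \<le> pmf (map_pmf f p) (f x)"
proof -
  have "pmf p x = measure p {x}"
    by (simp add: measure_pmf_single)
  also have "\<dots> \<le> measure p (f -` {f x})"
    by (rule measure_pmf.finite_measure_mono) auto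
  finally show ?thesis
    by (simp add: pmf_map)
qed

lemma pmf_entropy_map_le:
  assumes fin: "finite (set_pmf p)" and b: "1 < b"
  shows "pmf_entropy b (map_pmf f p) \<le> pmf_entropy b p"
proof -
  have "pmf p x * log b (pmf p x) \<le> pmf p x * log b (pmf (map_pmf f p) (f x))"
    if "x \<in> set_pmf p" for x
    using that b pmf_le_pmf_map[of p x f] by (intro mult_left_mono) (auto simp: pmf_positive)
  then have "(\<Sum>x\<in>set_pmf p. pmf p x * log b (pmf p x))
      \<le> (\<Sum>x\<in>set_pmf p. pmf p x * log b (pmf (map_pmf f p) (f x)))"
    by (rule sum_mono)
  then show ?thesis
    using pmf_entropy_map_eq[OF fin, of b f] unfolding pmf_entropy_def by simp
qed

lemma pmf_entropy_map_inj:
  assumes fin: "finite (set_pmf p)" and inj: "inj_on f (set_pmf p)"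
  shows "pmf_entropy b (map_pmf f p) = pmf_entropy b p"
proof -
  have "pmf_entropy b (map_pmf f p) = - (\<Sum>x\<in>set_pmf p. pmf p x * log b (pmf (map_pmf f p) (f x)))"
    by (rule pmf_entropy_map_eq[OF fin])
  also have "\<dots> = - (\<Sum>x\<in>set_pmf p. pmf p x * log b (pmf p x))" using pmf_map_inj[OF inj] by simp
  also have "\<dots> = pmf_entropy b p" by (simp add: pmf_entropy_def)
  finally show ?thesis .
qed

lemma pmf_entropy_le_cross_entropy:
  assumes fin: "finite (set_pmf p)" and b: "1 < b"
    and rpos: "\<And>x. x \<in> set_pmf p \<Longrightarrow> 0 < r x" and rsum: "(\<Sum>x\<in>set_pmf p. r x) \<le> 1"
  shows "pmf_entropy b p \<le> - (\<Sum>x\<in>set_pmf p. pmf p x * log b (r x))"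
proof -
  have lnb: "0 < ln b" using b by simp
  have key: "pmf p x * log b (r x) - pmf p x * log b (pmf p x) \<le> (r x - pmf p x) / ln b"
    if x: "x \<in> set_pmf p" for x
  proof -
    have px: "0 < pmf p x" using x by (simp add: set_pmf_iff pmf_nonneg order_le_neq_trans)
    have "pmf p x * log b (r x) - pmf p x * log b (pmf p x) = pmf p x * ln (r x / pmf p x) / ln b"
    proof -
      have "ln (r x / pmf p x) = ln (r x) - ln (pmf p x)" using px rpos[OF x] by (simp add: ln_div)
      then show ?thesis by (simp add: log_def right_diff_distrib diff_divide_distrib)
    qed
    also have "\<dots> \<le> pmf p x * (r x / pmf p x - 1) / ln b"
      using px rpos[OF x] lnb by (intro divide_right_mono mult_left_mono ln_le_minus_one) auto
    also have "pmf p x * (r x / pmf p x - 1) = r x - pmf p x" using px by (simp add: field_simps)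
    then have "pmf p x * (r x / pmf p x - 1) / ln b = (r x - pmf p x) / ln b" by simp
    finally show ?thesis .
  qed
  have "(\<Sum>x\<in>set_pmf p. pmf p x * log b (r x) - pmf p x * log b (pmf p x)) \<le> (\<Sum>x\<in>set_pmf p. (r x - pmf p x) / ln b)"
    using key by (intro sum_mono) auto
  also have "\<dots> = ((\<Sum>x\<in>set_pmf p. r x) - (\<Sum>x\<in>set_pmf p. pmf p x)) / ln b"
    by (simp add: sum_divide_distrib[symmetric] sum_subtractf)
  also have "(\<Sum>x\<in>set_pmf p. pmf p x) = 1" using sum_pmf_eq_1[OF fin] by simp
  also have "((\<Sum>x\<in>set_pmf p. r x) - 1) / ln b \<le> 0" using rsum lnb by (simp add: divide_nonpos_pos)
  finally show ?thesis unfolding pmf_entropy_def by (simp add: sum_subtractf)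
qed

lemma pmf_entropy_le_log_card:
  assumes fin: "finite A" and sub: "set_pmf p \<subseteq> A" and b: "1 < b"
  shows "pmf_entropy b p \<le> log b (card A)"
proof -
  have finp: "finite (set_pmf p)" using fin sub by (rule finite_subset[rotated])
  have ne: "set_pmf p \<noteq> {}" by (rule set_pmf_not_empty)
  have cp: "0 < card (set_pmf p)" using finp ne by (simp add: card_gt_0_iff)
  have "pmf_entropy b p \<le> - (\<Sum>x\<in>set_pmf p. pmf p x * log b (1 / card (set_pmf p)))"
    by (rule pmf_entropy_le_cross_entropy[OF finp b]) (use cp in auto)
  also have "\<dots> = - ((\<Sum>x\<in>set_pmf p. pmf p x) * log b (1 / card (set_pmf p)))"
    by (simp add: sum_distrib_right)
  also have "\<dots> = log b (card (set_pmf p))"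
    using sum_pmf_eq_1[OF finp] cp b by (simp add: log_divide)
  also have "\<dots> \<le> log b (card A)"
    using cp b card_mono[OF fin sub] by simp
  finally show ?thesis .
qed

lemma pmf_entropy_pmf_of_set:
  assumes "finite A" "A \<noteq> {}"
  shows "pmf_entropy b (pmf_of_set A) = log b (card A)"
proof -
  have c: "0 < card A" using assms by (simp add: card_gt_0_iff)
  have "pmf_entropy b (pmf_of_set A) = - (\<Sum>x\<in>A. (1 / card A) * log b (1 / card A))"
    unfolding pmf_entropy_def using assms by simp
  also have "\<dots> = - (card A * ((1 / card A) * log b (1 / card A)))" by simp
  also have "\<dots> = log b (card A)" using c by (simp add: log_divide)
  finally show ?thesis .
qed

lemma pmf_entropy_pair_pmf:
  assumes fp: "finite (set_pmf p)" and fq: "finite (set_pmf q)"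
  shows "pmf_entropy b (pair_pmf p q) = pmf_entropy b p + pmf_entropy b q"
proof -
  have sp: "(\<Sum>x\<in>set_pmf p. pmf p x) = 1" using sum_pmf_eq_1[OF fp] by simp
  have sq: "(\<Sum>x\<in>set_pmf q. pmf q x) = 1" using sum_pmf_eq_1[OF fq] by simp
  have "(\<Sum>z\<in>set_pmf (pair_pmf p q). pmf (pair_pmf p q) z * log b (pmf (pair_pmf p q) z))
      = (\<Sum>z\<in>set_pmf p \<times> set_pmf q. pmf p (fst z) * pmf q (snd z) * log b (pmf p (fst z) * pmf q (snd z)))"
    by (intro sum.cong) (auto simp: pmf_pair)
  also have "\<dots> = (\<Sum>x\<in>set_pmf p. \<Sum>y\<in>set_pmf q. pmf p x * pmf q y * log b (pmf p x * pmf q y))"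
    by (subst sum.cartesian_product) (simp add: case_prod_beta)
  also have "\<dots> = (\<Sum>x\<in>set_pmf p. \<Sum>y\<in>set_pmf q.
      pmf p x * pmf q y * log b (pmf p x) + pmf p x * pmf q y * log b (pmf q y))"
  proof (intro sum.cong refl)
    fix x y assume x: "x \<in> set_pmf p" and y: "y \<in> set_pmf q"
    show "pmf p x * pmf q y * log b (pmf p x * pmf q y)
        = pmf p x * pmf q y * log b (pmf p x) + pmf p x * pmf q y * log b (pmf q y)"
      using pmf_positive[OF x] pmf_positive[OF y] by (simp add: log_mult distrib_left)
  qed
  also have "\<dots> = (\<Sum>x\<in>set_pmf p. pmf p x * log b (pmf p x) * (\<Sum>y\<in>set_pmf q. pmf q y))
      + (\<Sum>x\<in>set_pmf p. pmf p x * (\<Sum>y\<in>set_pmf q. pmf q y * log b (pmf q y)))"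
    by (simp add: sum.distrib sum_distrib_left sum_distrib_right mult_ac)
  also have "\<dots> = (\<Sum>x\<in>set_pmf p. pmf p x * log b (pmf p x)) + (\<Sum>y\<in>set_pmf q. pmf q y * log b (pmf q y))"
    using sp sq by (simp add: sum_distrib_right[symmetric])
  finally show ?thesis unfolding pmf_entropy_def by simp
qed

lemma sum_pmf_product_le_1:
  assumes "finite (set_pmf p)" and "finite (set_pmf q)" and "S \<subseteq> set_pmf p \<times> set_pmf q"
  shows "(\<Sum>z\<in>S. pmf p (fst z) * pmf q (snd z)) \<le> 1"
proof -
  have "(\<Sum>z\<in>S. pmf p (fst z) * pmf q (snd z))
      \<le> (\<Sum>z\<in>set_pmf p \<times> set_pmf q. pmf p (fst z) * pmf q (snd z))"
    using assms by (intro sum_mono2) auto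
  also have "\<dots> = (\<Sum>x\<in>set_pmf p. pmf p x) * (\<Sum>y\<in>set_pmf q. pmf q y)"
    by (simp add: sum_product sum.cartesian_product case_prod_beta)
  also have "\<dots> = 1"
    using sum_pmf_eq_1[OF assms(1)] sum_pmf_eq_1[OF assms(2)] by simp
  finally show ?thesis .
qed

text \<open>Gibbs' inequality against the product of the marginals.\<close>

lemma rv_entropy_pair_le:
  assumes fin: "finite (set_pmf P)" and b: "1 < b"
  shows "rv_entropy b P (\<lambda>w. (f w, g w)) \<le> rv_entropy b P f + rv_entropy b P g"
proof -
  let ?J = "map_pmf (\<lambda>w. (f w, g w)) P" and ?F = "map_pmf f P" and ?G = "map_pmf g P"
  define r where "r z = pmf ?F (fst z) * pmf ?G (snd z)" for z
  have marginals: "pmf ?F (f w) > 0" "pmf ?G (g w) > 0" if "w \<in> set_pmf P" for w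
    using that by (auto intro: pmf_positive)
  have log_r: "log b (r (f w, g w)) = log b (pmf ?F (f w)) + log b (pmf ?G (g w))"
    if "w \<in> set_pmf P" for w
    using marginals[OF that] unfolding r_def by (simp add: log_mult)
  have "(\<Sum>z\<in>set_pmf ?J. r z) \<le> 1"
    unfolding r_def using fin by (intro sum_pmf_product_le_1) auto
  then have "pmf_entropy b ?J \<le> - (\<Sum>z\<in>set_pmf ?J. pmf ?J z * log b (r z))"
    using fin b marginals by (intro pmf_entropy_le_cross_entropy) (auto simp: r_def)
  also have "(\<Sum>z\<in>set_pmf ?J. pmf ?J z * log b (r z))
      = (\<Sum>w\<in>set_pmf P. pmf P w * log b (pmf ?F (f w)) + pmf P w * log b (pmf ?G (g w)))"
    unfolding sum_set_pmf_map[OF fin] using log_r by (simp add: distrib_left)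
  also have "\<dots> = (\<Sum>x\<in>set_pmf ?F. pmf ?F x * log b (pmf ?F x))
      + (\<Sum>y\<in>set_pmf ?G. pmf ?G y * log b (pmf ?G y))"
    by (simp only: sum.distrib sum_set_pmf_map[OF fin])
  finally show ?thesis
    unfolding rv_entropy_def pmf_entropy_def by simp
qed

lemma rv_entropy_le_pair:
  assumes "finite (set_pmf P)" and "1 < b"
  shows "rv_entropy b P f \<le> rv_entropy b P (\<lambda>w. (f w, g w))"
proof -
  have "map_pmf f P = map_pmf fst (map_pmf (\<lambda>w. (f w, g w)) P)"
    by (simp add: map_pmf_comp)
  then show ?thesis
    unfolding rv_entropy_def using assms by (simp add: pmf_entropy_map_le)
qed

lemma rv_entropy_le_log_card:
  assumes "finite (set_pmf P)" and "1 < b" and "finite A" and "f ` set_pmf P \<subseteq> A"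
  shows "rv_entropy b P f \<le> log b (card A)"
  unfolding rv_entropy_def using assms by (intro pmf_entropy_le_log_card) auto

definition vsum :: "('a, 'b) ring_scheme \<Rightarrow> nat \<Rightarrow> nat list \<Rightarrow> (nat \<Rightarrow> 'a list) \<Rightarrow> 'a list" where
  "vsum R L ks W = foldr (\<lambda>k acc. map2 (add R) (W k) acc) ks (replicate L (zero R))"

lemma msum_eq_vsum: "msum R K L W = vsum R L [1..<K+1] W"
  unfolding msum_def vsum_def ..

lemma vsum_Nil [simp]: "vsum R L [] W = replicate L (zero R)"
  unfolding vsum_def by simp

lemma vsum_Cons [simp]: "vsum R L (k # ks) W = map2 (add R) (W k) (vsum R L ks W)"
  unfolding vsum_def by simp

lemma vsum_cong: "(\<And>k. k \<in> set ks \<Longrightarrow> W k = W' k) \<Longrightarrow> vsum R L ks W = vsum R L ks W'"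
  by (induction ks) simp_all

lemma card_vecs: "finite (carrier R) \<Longrightarrow> card (vecs R L) = card (carrier R) ^ L"
  and finite_vecs: "finite (carrier R) \<Longrightarrow> finite (vecs R L)"
proof -
  have "vecs R L = {xs. set xs \<subseteq> carrier R \<and> length xs = L}"
    unfolding vecs_def by auto
  then show "finite (carrier R) \<Longrightarrow> card (vecs R L) = card (carrier R) ^ L"
    and "finite (carrier R) \<Longrightarrow> finite (vecs R L)"
    by (simp_all add: card_lists_length_eq finite_lists_length_eq)
qed

context abelian_group
begin

lemma vecs_iff_nth: "xs \<in> vecs G L \<longleftrightarrow> length xs = L \<and> (\<forall>i<L. xs ! i \<in> carrier G)"
  unfolding vecs_def by (auto simp: in_set_conv_nth) (metis nth_mem subset_iff)

lemma vadd_closed: "xs \<in> vecs G L \<Longrightarrow> ys \<in> vecs G L \<Longrightarrow> map2 (add G) xs ys \<in> vecs G L"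
  unfolding vecs_iff_nth by auto

lemma vsum_closed: "(\<And>k. k \<in> set ks \<Longrightarrow> W k \<in> vecs G L) \<Longrightarrow> vsum G L ks W \<in> vecs G L"
proof (induction ks)
  case Nil
  show ?case by (auto simp: vecs_def)
next
  case (Cons k ks)
  then show ?case by (simp add: vadd_closed)
qed

lemma vadd_left_cancel:
  assumes "xs \<in> vecs G L" "ys \<in> vecs G L" "zs \<in> vecs G L"
    and "map2 (add G) zs xs = map2 (add G) zs ys"
  shows "xs = ys"
proof (rule nth_equalityI)
  show "length xs = length ys"
    using assms(1,2) unfolding vecs_iff_nth by simp
  fix i assume "i < length xs"
  then have "i < L" "i < length zs"
    using assms(1,3) unfolding vecs_iff_nth by simp_all
  then have "zs ! i \<oplus> xs ! i = zs ! i \<oplus> ys ! i"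
    using arg_cong[OF assms(4), of "\<lambda>us. us ! i"] assms(1-3) unfolding vecs_iff_nth by simp
  then show "xs ! i = ys ! i"
    using \<open>i < L\<close> assms(1-3) unfolding vecs_iff_nth by simp
qed

lemma vadd_right_cancel:
  assumes "xs \<in> vecs G L" "ys \<in> vecs G L" "zs \<in> vecs G L"
    and "map2 (add G) xs zs = map2 (add G) ys zs"
  shows "xs = ys"
proof -
  have comm: "map2 (add G) us zs = map2 (add G) zs us" if "us \<in> vecs G L" for us
    using that assms(3) unfolding vecs_iff_nth by (intro nth_equalityI) (auto intro: a_comm)
  show ?thesis
    using vadd_left_cancel[OF assms(1-3)] assms(4) comm assms(1,2) by simp
qed

lemma vsum_upd_eqD:
  assumes "distinct ks" "k \<in> set ks" and W: "\<And>j. j \<in> set ks \<Longrightarrow> W j \<in> vecs G L"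
    and v: "v \<in> vecs G L" and eq: "vsum G L ks (W(k := v)) = vsum G L ks W"
  shows "v = W k"
  using assms(1,2) W eq
proof (induction ks)
  case (Cons j ks)
  have closed: "vsum G L ks (W(k := v)) \<in> vecs G L" "vsum G L ks W \<in> vecs G L"
    using Cons.prems(3) v by (auto intro!: vsum_closed)
  show ?case
  proof (cases "j = k")
    case True
    then have "vsum G L ks (W(k := v)) = vsum G L ks W"
      using Cons.prems(1) by (intro vsum_cong) auto
    then have "map2 (add G) v (vsum G L ks W) = map2 (add G) (W k) (vsum G L ks W)"
      using Cons.prems(4) True by (simp only: vsum_Cons fun_upd_same)
    then show ?thesis
      using Cons.prems(3) True by (intro vadd_right_cancel[OF v _ closed(2)]) auto
  next
    case False
    then have "map2 (add G) (W j) (vsum G L ks (W(k := v))) = map2 (add G) (W j) (vsum G L ks W)"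
      using Cons.prems(4) False by (simp only: vsum_Cons fun_upd_other)
    then have rest: "vsum G L ks (W(k := v)) = vsum G L ks W"
      using Cons.prems(3) by (intro vadd_left_cancel[OF closed, of "W j"]) auto
    show ?thesis
      by (rule Cons.IH[OF _ _ _ rest]) (use Cons.prems False in auto)
  qed
qed simp

lemma msum_upd_eqD:
  assumes "W \<in> msg_space G K L" "k \<in> {1..K}" "v \<in> vecs G L"
    and "msum G K L (W(k := v)) = msum G K L W"
  shows "v = W k"
  using assms unfolding msum_eq_vsum msg_space_def by (intro vsum_upd_eqD) auto

lemma msum_closed: "W \<in> msg_space G K L \<Longrightarrow> msum G K L W \<in> vecs G L"
  unfolding msum_eq_vsum msg_space_def by (intro vsum_closed) auto

end

lemma card_funs_fixed_outside:
  assumes "finite A" "finite B"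
  shows "card {W. (\<forall>k\<in>A. W k \<in> B) \<and> (\<forall>k. k \<notin> A \<longrightarrow> W k = e)} = card B ^ card A"
    and "finite {W. (\<forall>k\<in>A. W k \<in> B) \<and> (\<forall>k. k \<notin> A \<longrightarrow> W k = e)}"
proof -
  let ?S = "{W. (\<forall>k\<in>A. W k \<in> B) \<and> (\<forall>k. k \<notin> A \<longrightarrow> W k = e)}"
  have bij: "bij_betw (\<lambda>W. restrict W A) ?S (PiE A (\<lambda>_. B))"
  proof (rule bij_betw_byWitness[where f' = "\<lambda>f k. if k \<in> A then f k else e"])
    show "\<forall>W\<in>?S. (\<lambda>k. if k \<in> A then restrict W A k else e) = W"
      by (auto intro!: ext)
    show "\<forall>f\<in>PiE A (\<lambda>_. B). restrict (\<lambda>k. if k \<in> A then f k else e) A = f"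
      by (auto simp: PiE_def extensional_def restrict_def intro!: ext)
  qed auto
  show "card ?S = card B ^ card A"
    using bij_betw_same_card[OF bij] card_PiE[OF assms(1), of "\<lambda>_. B"] by simp
  show "finite ?S"
    using bij_betw_finite[OF bij] finite_PiE[OF assms(1), of "\<lambda>_. B"] assms(2) by simp
qed

lemma trans_cong:
  "(\<And>j. j \<in> Z n \<Longrightarrow> W j = W' j) \<Longrightarrow> trans Z \<psi> n (W, u) = trans Z \<psi> n (W', u)"
  unfolding trans_def by (simp cong: if_cong)

locale secure_setting =
  fixes F :: "'a ring" and K N Nr Mp M L :: nat and Z :: "nat \<Rightarrow> nat set" and T :: "nat \<Rightarrow> nat"
    and \<psi> :: "nat \<Rightarrow> (nat \<Rightarrow> 'a list) \<Rightarrow> nat \<Rightarrow> 'a list" and PQ :: "nat pmf"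
  assumes field_F: "field F" and finite_carrier: "finite (carrier F)" and L_pos: "0 < L"
    and Nr_pos: "0 < Nr" and Nr_le_N: "Nr \<le> N" and Mp_def: "Mp = N - Nr + 1" and M_mult_N: "M * N = K * Mp"
    and secure: "secure_scheme F K N Nr M L Z T \<psi> PQ"
begin

sublocale field F
  by (rule field_F)

lemma Z_subset: "n \<in> {1..N} \<Longrightarrow> Z n \<subseteq> {1..K}"
  and card_Z_le: "n \<in> {1..N} \<Longrightarrow> card (Z n) \<le> M"
  and finite_set_pmf_PQ: "finite (set_pmf PQ)"
  and decodable: "A \<subseteq> {1..N} \<Longrightarrow> card A = Nr \<Longrightarrow> \<exists>dec. \<forall>\<omega>\<in>set_pmf (joint F K L PQ).
      dec (\<lambda>n. if n \<in> A then trans Z \<psi> n \<omega> else []) = msum F K L (fst \<omega>)"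
  and security: "cond_mi (real (card (carrier F))) (joint F K L PQ) fst (trans_all N Z \<psi>)
      (\<lambda>\<omega>. msum F K L (fst \<omega>)) = 0"
  using secure unfolding secure_scheme_def by blast+

definition zero_msg :: "nat \<Rightarrow> 'a list" where
  "zero_msg k = (if k \<in> {1..K} then replicate L \<zero>\<^bsub>F\<^esub> else [])"

lemma zero_msg_in_msg_space: "zero_msg \<in> msg_space F K L"
  unfolding zero_msg_def msg_space_def vecs_def by auto

lemma msg_space_nonempty: "msg_space F K L \<noteq> {}"
  using zero_msg_in_msg_space by blast

lemma msg_space_upd:
  "W \<in> msg_space F K L \<Longrightarrow> k \<in> {1..K} \<Longrightarrow> v \<in> vecs F L \<Longrightarrow> W(k := v) \<in> msg_space F K L"
  unfolding msg_space_def by auto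

lemma msg_in_vecs: "W \<in> msg_space F K L \<Longrightarrow> k \<in> {1..K} \<Longrightarrow> W k \<in> vecs F L"
  unfolding msg_space_def by auto

lemma card_msg_space: "card (msg_space F K L) = card (carrier F) ^ (K * L)"
  and finite_msg_space: "finite (msg_space F K L)"
proof -
  have "card (msg_space F K L) = card (vecs F L) ^ card {1..K}"
    unfolding msg_space_def by (rule card_funs_fixed_outside) (simp_all add: finite_vecs finite_carrier)
  then show "card (msg_space F K L) = card (carrier F) ^ (K * L)"
    by (simp add: card_vecs finite_carrier power_mult[symmetric] mult.commute)
  show "finite (msg_space F K L)"
    unfolding msg_space_def by (rule card_funs_fixed_outside) (simp_all add: finite_vecs finite_carrier)
qed

lemma set_pmf_joint: "set_pmf (joint F K L PQ) = msg_space F K L \<times> set_pmf PQ"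
  unfolding joint_def using finite_msg_space msg_space_nonempty by simp

lemma finite_set_pmf_joint: "finite (set_pmf (joint F K L PQ))"
  using set_pmf_joint finite_msg_space finite_set_pmf_PQ by simp

lemma transmissions_determine_coordinate:
  assumes A: "A \<subseteq> {1..N}" "card A = Nr" and W: "W \<in> msg_space F K L" and k: "k \<in> {1..K}"
    and v: "v \<in> vecs F L" and u: "u \<in> set_pmf PQ"
    and same: "\<And>n. n \<in> A \<Longrightarrow> trans Z \<psi> n (W(k := v), u) = trans Z \<psi> n (W, u)"
  shows "v = W k"
proof -
  obtain dec where dec: "\<forall>\<omega>\<in>set_pmf (joint F K L PQ).
      dec (\<lambda>n. if n \<in> A then trans Z \<psi> n \<omega> else []) = msum F K L (fst \<omega>)"
    using decodable[OF A] by blast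
  have "(W, u) \<in> set_pmf (joint F K L PQ)" "(W(k := v), u) \<in> set_pmf (joint F K L PQ)"
    using W u msg_space_upd[OF W k v] by (simp_all add: set_pmf_joint)
  then have "dec (\<lambda>n. if n \<in> A then trans Z \<psi> n (W, u) else []) = msum F K L W"
    and "dec (\<lambda>n. if n \<in> A then trans Z \<psi> n (W(k := v), u) else []) = msum F K L (W(k := v))"
    using dec by simp_all
  moreover have "(\<lambda>n. if n \<in> A then trans Z \<psi> n (W(k := v), u) else [])
      = (\<lambda>n. if n \<in> A then trans Z \<psi> n (W, u) else [])"
    using same by auto
  ultimately have "msum F K L (W(k := v)) = msum F K L W"
    by simp
  then show ?thesis
    by (rule msum_upd_eqD[OF W k v])
qed

definition hold :: "nat \<Rightarrow> nat set" where
  "hold k = {n\<in>{1..N}. k \<in> Z n}"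

lemma hold_subset: "hold k \<subseteq> {1..N}"
  unfolding hold_def by auto

lemma card_hold_ge:
  assumes k: "k \<in> {1..K}"
  shows "Mp \<le> card (hold k)"
proof (rule ccontr)
  assume "\<not> Mp \<le> card (hold k)"
  moreover have "card ({1..N} - hold k) = N - card (hold k)"
    using card_Diff_subset[OF finite_subset[OF hold_subset] hold_subset] by simp
  ultimately have "Nr \<le> card ({1..N} - hold k)"
    using Mp_def Nr_le_N by linarith
  then obtain A where A: "A \<subseteq> {1..N} - hold k" "card A = Nr"
    by (meson obtain_subset_with_card_n)
  obtain u where u: "u \<in> set_pmf PQ"
    using set_pmf_not_empty[of PQ] by blast
  define e where "e = \<one>\<^bsub>F\<^esub> # replicate (L - 1) \<zero>\<^bsub>F\<^esub>"
  have e: "e \<in> vecs F L"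
    unfolding e_def vecs_def using L_pos by auto
  have "trans Z \<psi> n (zero_msg(k := e), u) = trans Z \<psi> n (zero_msg, u)" if "n \<in> A" for n
  proof (rule trans_cong)
    show "(zero_msg(k := e)) j = zero_msg j" if "j \<in> Z n" for j
      using A(1) \<open>n \<in> A\<close> that unfolding hold_def by auto
  qed
  then have "e = zero_msg k"
    using A(1) by (intro transmissions_determine_coordinate[OF _ A(2) zero_msg_in_msg_space k e u]) auto
  then have "\<one>\<^bsub>F\<^esub> = \<zero>\<^bsub>F\<^esub>"
    using k L_pos unfolding e_def zero_msg_def by (cases L) simp_all
  then show False
    using one_not_zero by simp
qed

lemma card_hold: "k \<in> {1..K} \<Longrightarrow> card (hold k) = Mp"
  and card_Z: "n \<in> {1..N} \<Longrightarrow> card (Z n) = M"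
proof -
  have "(\<Sum>k\<in>{1..K}. card (hold k)) = (\<Sum>n\<in>{1..N}. card {k\<in>{1..K}. k \<in> Z n})"
    unfolding hold_def card_eq_sum by (rule sum.swap_restrict) simp_all
  also have "\<dots> = (\<Sum>n\<in>{1..N}. card (Z n))"
  proof (rule sum.cong)
    show "card {k\<in>{1..K}. k \<in> Z n} = card (Z n)" if "n \<in> {1..N}" for n
    proof -
      have "{k\<in>{1..K}. k \<in> Z n} = Z n"
        using Z_subset[OF that] by blast
      then show ?thesis by simp
    qed
  qed simp
  finally have double_count: "(\<Sum>k\<in>{1..K}. card (hold k)) = (\<Sum>n\<in>{1..N}. card (Z n))" .
  have "(\<Sum>k\<in>{1..K}. Mp) \<le> (\<Sum>k\<in>{1..K}. card (hold k))"
    using card_hold_ge by (intro sum_mono) simp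
  moreover have "(\<Sum>n\<in>{1..N}. card (Z n)) \<le> (\<Sum>n\<in>{1..N}. M)"
    using card_Z_le by (intro sum_mono) simp
  moreover have "(\<Sum>n\<in>{1..N}. M) = (\<Sum>k\<in>{1..K}. Mp)"
    using M_mult_N by (simp add: mult.commute)
  ultimately have hold_sum: "(\<Sum>k\<in>{1..K}. Mp) = (\<Sum>k\<in>{1..K}. card (hold k))"
    and Z_sum: "(\<Sum>n\<in>{1..N}. card (Z n)) = (\<Sum>n\<in>{1..N}. M)"
    using double_count by linarith+
  show "card (hold k) = Mp" if "k \<in> {1..K}"
    using sum_mono_inv[OF hold_sum card_hold_ge that] by simp
  show "card (Z n) = M" if "n \<in> {1..N}"
    using sum_mono_inv[OF Z_sum card_Z_le that] by simp
qed

lemma biregular_hold: "biregular {1..K} {1..N} hold Mp M"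
proof
  show "card {k\<in>{1..K}. n \<in> hold k} = M" if "n \<in> {1..N}" for n
  proof -
    have "{k\<in>{1..K}. n \<in> hold k} = Z n"
      using Z_subset[OF that] that unfolding hold_def by auto
    then show ?thesis
      using card_Z[OF that] by simp
  qed
qed (use hold_subset card_hold in auto)

lemma peeling_step:
  assumes W: "W \<in> msg_space F K L" and W': "W' \<in> msg_space F K L" and u: "u \<in> set_pmf PQ"
    and n: "n \<in> hold k" and agree: "\<And>j. j \<in> Z n \<Longrightarrow> j \<noteq> k \<Longrightarrow> W j = W' j"
    and same: "trans Z \<psi> n (W, u) = trans Z \<psi> n (W', u)"
  shows "W k = W' k"
proof -
  have nN: "n \<in> {1..N}" and "k \<in> Z n"
    using n unfolding hold_def by auto
  then have k: "k \<in> {1..K}"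
    using Z_subset by blast
  let ?A = "insert n ({1..N} - hold k)"
  have "?A \<subseteq> {1..N}"
    using nN by blast
  moreover have "card ({1..N} - hold k) = N - Mp"
    using card_Diff_subset[OF finite_subset[OF hold_subset] hold_subset] card_hold[OF k] by simp
  then have "card ?A = Nr"
    using n Mp_def Nr_le_N Nr_pos by simp
  moreover have "trans Z \<psi> m (W(k := W' k), u) = trans Z \<psi> m (W, u)" if "m \<in> ?A" for m
  proof (cases "m = n")
    case True
    have "trans Z \<psi> n (W(k := W' k), u) = trans Z \<psi> n (W', u)"
      by (rule trans_cong) (use agree in auto)
    then show ?thesis
      using True same by simp
  next
    case False
    then have "k \<notin> Z m"
      using that unfolding hold_def by auto
    then show ?thesis
      by (intro trans_cong) auto
  qed
  ultimately have "W' k = W k"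
    by (rule transmissions_determine_coordinate[OF _ _ W k msg_in_vecs[OF W' k] u])
  then show ?thesis ..
qed

lemma peelable_determines:
  assumes "peelable hold ks" and W: "W \<in> msg_space F K L" and W': "W' \<in> msg_space F K L"
    and u: "u \<in> set_pmf PQ" and same: "trans_all N Z \<psi> (W, u) = trans_all N Z \<psi> (W', u)"
    and agree: "\<And>j. j \<notin> set ks \<Longrightarrow> W j = W' j"
  shows "W = W'"
  using assms(1) agree
proof (induction ks)
  case Nil
  then show ?case by auto
next
  case (Cons k ks)
  obtain n where n: "n \<in> hold k" and fresh: "\<forall>k'\<in>set ks. n \<notin> hold k'"
    using Cons.prems(1) by auto
  have "n \<in> {1..N}"
    using n unfolding hold_def by auto
  then have "trans Z \<psi> n (W, u) = trans Z \<psi> n (W', u)"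
    using fun_cong[OF same, of n] unfolding trans_all_def by simp
  moreover have "W j = W' j" if "j \<in> Z n" "j \<noteq> k" for j
  proof -
    have "n \<in> hold j"
      using that \<open>n \<in> {1..N}\<close> unfolding hold_def by auto
    then show ?thesis
      using that fresh Cons.prems(2) by auto
  qed
  ultimately have "W k = W' k"
    by (intro peeling_step[OF W W' u n])
  then have "W j = W' j" if "j \<notin> set ks" for j
    using Cons.prems(2)[of j] that by (cases "j = k") auto
  then show ?case
    using Cons.prems(1) by (intro Cons.IH) auto
qed

abbreviation q :: real where
  "q \<equiv> real (card (carrier F))"

lemma one_less_q: "1 < q"
proof -
  have "{\<zero>\<^bsub>F\<^esub>, \<one>\<^bsub>F\<^esub>} \<subseteq> carrier F"
    by simp
  then have "card {\<zero>\<^bsub>F\<^esub>, \<one>\<^bsub>F\<^esub>} \<le> card (carrier F)"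
    using finite_carrier by (rule card_mono[rotated])
  then show ?thesis
    using one_not_zero by simp
qed

lemma log_q_power [simp]: "log q (q ^ n) = real n"
  using one_less_q by (simp add: log_nat_power)

lemma entropy_msgs: "pmf_entropy q (pmf_of_set (msg_space F K L)) = real (K * L)"
  using pmf_entropy_pmf_of_set[OF finite_msg_space msg_space_nonempty] card_msg_space by simp

lemma entropy_joint: "pmf_entropy q (joint F K L PQ) = real (K * L) + pmf_entropy q PQ"
  unfolding joint_def using finite_msg_space msg_space_nonempty finite_set_pmf_PQ entropy_msgs
  by (subst pmf_entropy_pair_pmf) auto

lemma entropy_transmissions_le:
  "rv_entropy q (joint F K L PQ) (trans_all N Z \<psi>) \<le> pmf_entropy q PQ + real L"
proof -
  let ?P = "joint F K L PQ" and ?X = "trans_all N Z \<psi>" and ?S = "\<lambda>\<omega>. msum F K L (fst \<omega>)"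
  note fin = finite_set_pmf_joint and q = one_less_q
  have "rv_entropy q ?P (\<lambda>\<omega>. (fst \<omega>, ?S \<omega>)) + rv_entropy q ?P (\<lambda>\<omega>. (?X \<omega>, ?S \<omega>))
      = rv_entropy q ?P (\<lambda>\<omega>. (fst \<omega>, ?X \<omega>, ?S \<omega>)) + rv_entropy q ?P ?S"
    using security unfolding cond_mi_def by simp
  moreover have "rv_entropy q ?P (\<lambda>\<omega>. (fst \<omega>, ?X \<omega>, ?S \<omega>)) \<le> pmf_entropy q ?P"
    unfolding rv_entropy_def using fin q by (rule pmf_entropy_map_le)
  moreover have "rv_entropy q ?P fst = real (K * L)"
    unfolding rv_entropy_def joint_def by (simp add: map_fst_pair_pmf entropy_msgs)
  then have "real (K * L) \<le> rv_entropy q ?P (\<lambda>\<omega>. (fst \<omega>, ?S \<omega>))"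
    using rv_entropy_le_pair[OF fin q, of fst ?S] by simp
  moreover have "rv_entropy q ?P ?X \<le> rv_entropy q ?P (\<lambda>\<omega>. (?X \<omega>, ?S \<omega>))"
    using fin q by (rule rv_entropy_le_pair)
  moreover have "rv_entropy q ?P ?S \<le> log q (card (vecs F L))"
    using fin q finite_vecs[OF finite_carrier]
    by (rule rv_entropy_le_log_card) (auto simp: set_pmf_joint intro: msum_closed)
  then have "rv_entropy q ?P ?S \<le> real L"
    by (simp add: card_vecs finite_carrier)
  ultimately show ?thesis
    using entropy_joint by linarith
qed

lemma entropy_transmissions_ge:
  assumes ks: "peelable hold ks" "set ks \<subseteq> {1..K}"
  shows "real (length ks * L) \<le> rv_entropy q (joint F K L PQ) (trans_all N Z \<psi>)"
proof -
  let ?P = "joint F K L PQ" and ?X = "trans_all N Z \<psi>"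
  note fin = finite_set_pmf_joint and q = one_less_q
  define rest where "rest \<omega> = (\<lambda>k. if k \<in> set ks then [] else fst \<omega> k)"
    for \<omega> :: "(nat \<Rightarrow> 'a list) \<times> nat"
  have "inj_on (\<lambda>\<omega>. (?X \<omega>, snd \<omega>, rest \<omega>)) (set_pmf ?P)"
  proof (rule inj_onI)
    fix \<omega> \<omega>' assume \<omega>: "\<omega> \<in> set_pmf ?P" "\<omega>' \<in> set_pmf ?P"
      and eq: "(?X \<omega>, snd \<omega>, rest \<omega>) = (?X \<omega>', snd \<omega>', rest \<omega>')"
    obtain W u W' where \<omega>_eq: "\<omega> = (W, u)" "\<omega>' = (W', u)"
      using eq by (metis prod.collapse prod.inject)
    have "W = W'"
    proof (rule peelable_determines[OF ks(1)])
      show "W \<in> msg_space F K L" "W' \<in> msg_space F K L" "u \<in> set_pmf PQ"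
        using \<omega> unfolding \<omega>_eq set_pmf_joint by auto
      show "?X (W, u) = ?X (W', u)"
        using eq unfolding \<omega>_eq by simp
      show "W j = W' j" if "j \<notin> set ks" for j
        using fun_cong[of "rest \<omega>" "rest \<omega>'" j] eq that unfolding \<omega>_eq rest_def by simp
    qed
    then show "\<omega> = \<omega>'"
      unfolding \<omega>_eq by simp
  qed
  then have "pmf_entropy q ?P = rv_entropy q ?P (\<lambda>\<omega>. (?X \<omega>, snd \<omega>, rest \<omega>))"
    unfolding rv_entropy_def using fin by (simp add: pmf_entropy_map_inj)
  also have "\<dots> \<le> rv_entropy q ?P ?X + (rv_entropy q ?P snd + rv_entropy q ?P rest)"
    using rv_entropy_pair_le[OF fin q, of ?X "\<lambda>\<omega>. (snd \<omega>, rest \<omega>)"]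
      rv_entropy_pair_le[OF fin q, of snd rest] by simp
  also have "rv_entropy q ?P snd = pmf_entropy q PQ"
    unfolding rv_entropy_def joint_def by (simp add: map_snd_pair_pmf)
  also have "rv_entropy q ?P rest \<le> real ((K - length ks) * L)"
  proof -
    let ?D = "{1..K} - set ks"
    let ?R = "{W. (\<forall>k\<in>?D. W k \<in> vecs F L) \<and> (\<forall>k. k \<notin> ?D \<longrightarrow> W k = [])}"
    have card_D: "card ?D = K - length ks"
      using ks(2) distinct_card[OF peelable_distinct[OF ks(1)]] by (simp add: card_Diff_subset)
    have "rest ` set_pmf ?P \<subseteq> ?R"
      unfolding set_pmf_joint rest_def msg_space_def by auto
    then have "rv_entropy q ?P rest \<le> log q (card ?R)"
      using fin q finite_vecs[OF finite_carrier]
      by (intro rv_entropy_le_log_card card_funs_fixed_outside(2)) simp_all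
    also have "card ?R = card (vecs F L) ^ card ?D"
      by (rule card_funs_fixed_outside) (simp_all add: finite_vecs finite_carrier)
    also have "\<dots> = card (carrier F) ^ ((K - length ks) * L)"
      using card_D by (simp add: card_vecs finite_carrier power_mult[symmetric] mult.commute)
    finally show ?thesis
      by simp
  qed
  finally have "real (K * L) \<le> rv_entropy q ?P ?X + real ((K - length ks) * L)"
    using entropy_joint by simp
  moreover have "length ks \<le> K"
    using card_mono[OF _ ks(2)] distinct_card[OF peelable_distinct[OF ks(1)]] by simp
  ultimately show ?thesis
    by (simp add: diff_mult_distrib)
qed

theorem rand_size_ge_peelable:
  assumes "peelable hold ks" "set ks \<subseteq> {1..K}"
  shows "real (length ks) - 1 \<le> rand_size F L PQ"
proof -
  have "real (length ks * L) \<le> pmf_entropy q PQ + real L"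
    using entropy_transmissions_ge[OF assms] entropy_transmissions_le by simp
  then have "(real (length ks) - 1) * real L \<le> pmf_entropy q PQ"
    by (simp add: algebra_simps)
  then show ?thesis
    unfolding rand_size_def using L_pos by (simp add: pos_le_divide_eq)
qed

end

lemma excess_of_Modp:
  fixes N Mp :: nat
  assumes "0 < N" and "3 \<le> Mp div gcd N Mp"
    and "Modp (N div gcd N Mp) (Mp div gcd N Mp) = Mp div gcd N Mp - 1"
  shows "(N div Mp + 1) * Mp = N + gcd N Mp" and "2 * gcd N Mp < Mp"
proof -
  define g a b where "g = gcd N Mp" and "a = N div g" and "b = Mp div g"
  have N: "N = g * a" and Mp: "Mp = g * b" and g: "0 < g"
    unfolding g_def a_def b_def using assms(1) by simp_all
  have b: "3 \<le> b"
    using assms(2) unfolding b_def g_def .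
  have "a mod b = b - 1"
    using assms(3) b unfolding Modp_def a_def b_def g_def by (auto split: if_splits)
  then have "a = b * (a div b) + (b - 1)"
    by (metis div_mult_mod_eq mult.commute)
  then have a: "(a div b + 1) * b = a + 1"
    using b by (simp add: algebra_simps)
  have "N div Mp = a div b"
    unfolding N Mp using g by simp
  then have "(N div Mp + 1) * Mp = g * ((a div b + 1) * b)"
    by (simp only:) (simp add: Mp algebra_simps)
  also have "\<dots> = N + g"
    unfolding a N by simp
  finally show "(N div Mp + 1) * Mp = N + gcd N Mp"
    unfolding g_def .
  have "2 * g < Mp"
    unfolding Mp using g b by simp
  then show "2 * gcd N Mp < Mp"
    unfolding g_def .
qed

lemma ceiling_divide_eq_of_excess:
  fixes c r N g :: nat
  assumes "c * r = N + g" and "0 < g" and "g < r"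
  shows "\<lceil>real N / real r\<rceil> = int c"
proof -
  have "real N = real c * real r - real g"
    using assms(1) by (simp flip: of_nat_mult of_nat_add)
  then have "real c - 1 < real N / real r" "real N / real r \<le> real c"
    using assms(2,3) by (simp_all add: field_simps)
  then show ?thesis
    by (simp add: ceiling_eq_iff)
qed

theorem lemma4:
  fixes K N Nr Mp :: nat
  assumes "0 < K" and "0 < N" and "0 < Nr" and "Nr \<le> N" and "N dvd K"
    and "Mp = N - Nr + 1"
    and "Mp div gcd N Mp \<ge> 3"
    and "Modp (N div gcd N Mp) (Mp div gcd N Mp) = Mp div gcd N Mp - 1"
  shows "\<exists>q0::nat. \<forall>(F :: 'a ring) L Z T \<psi> PQ.
     field F \<longrightarrow> finite (carrier F) \<longrightarrow> card (carrier F) \<ge> q0 \<longrightarrow> 0 < L \<longrightarrow>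
     secure_scheme F K N Nr (K div N * Mp) L Z T \<psi> PQ \<longrightarrow>
     comm_cost N Nr L T = opt_cost F K N Nr (K div N * Mp) L \<longrightarrow>
     rand_size F L PQ \<ge> of_int \<lceil>real N / real Mp\<rceil>"
proof (intro exI[of _ 0] allI impI)
  fix F :: "'a ring" and L Z T \<psi> PQ
  assume "field F" "finite (carrier F)" "0 < L" "secure_scheme F K N Nr (K div N * Mp) L Z T \<psi> PQ"
  moreover have "K div N * Mp * N = K * Mp"
    using assms(5) by simp
  ultimately interpret secure_setting F K N Nr Mp "K div N * Mp" L Z T \<psi> PQ
    using assms(3,4,6) by (intro secure_setting.intro) simp_all
  define c g where "c = N div Mp + 1" and "g = gcd N Mp"
  have excess: "c * Mp = N + g" and small: "2 * g < Mp" and "0 < g"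
    using excess_of_Modp[OF assms(2,7,8)] assms(2) unfolding c_def g_def by simp_all
  interpret biregular_excess "{1..K}" "{1..N}" hold Mp "K div N * Mp" c g
    using biregular_hold excess small assms(1) by (simp add: biregular_excess_def biregular_excess_axioms_def)
  obtain ks where "peelable hold ks" "set ks \<subseteq> {1..K}" "length ks = c + 1"
    using has_peelable_beyond_cover[OF \<open>0 < g\<close>] unfolding has_peelable_def by blast
  then have "real c \<le> rand_size F L PQ"
    using rand_size_ge_peelable by fastforce
  moreover have "\<lceil>real N / real Mp\<rceil> = int c"
    using ceiling_divide_eq_of_excess[OF excess \<open>0 < g\<close>] small by simp
  ultimately show "rand_size F L PQ \<ge> of_int \<lceil>real N / real Mp\<rceil>"
    by simp
qed

end
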